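(* For any RES-graph $(G,\gamma,b)$, any shifting $\gamma'$ of $\gamma$, and any set of vertices $X$ with $b\in X$, $$\tilde{\nu}(G,\gamma,b)\le \gamma'(E(X))+\tfrac12|\delta(X)|-\mathrm{odd}_{\gamma'}(G-X).$$
   Context: Graphs are finite and may have loops and multiple edges. Each edge consists of two half-edges; each half-edge is incident to a vertex, and a loop has both half-edges at the same vertex, so it contributes $2$ to that vertex's degree. An arc is an ordered pair $(h_1,h_2)$ of half-edges forming an edge; its tail is the vertex of $h_1$ and its head is the vertex of $h_2$. A trail is a sequence of arcs whose edges are pairwise distinct and such that the head of each arc (other than the last) is the tail of the next. A circuit is a trail whose head equals its tail. A circuit hits a vertex $v$ if it contains an arc incident to $v$. A circuit-decomposition of $G$ is a collection of circuits such that every edge of $G$ is used by exactly one circuit of the collection. A graph is Eulerian if it is connected and every vertex has even degree. A signature of $G$ is a function $\gamma:E(G)\to\mathbb{Z}_2$. The weight of a trail is the sum in $\mathbb{Z}_2$ of $\gamma$ over its edges, and a trail (or edge) is zero or non-zero according to its weight. Shifting at a vertex $v$ means adding $1$ to the weight of every non-loop edge incident to $v$. A shifting of $\gamma$ is any signature obtainable from $\gamma$ by a sequence of shiftings at vertices. An RES-graph is a triple $(G,\gamma,b)$ where $G$ is an Eulerian graph, $\gamma$ is a signature of $G$, and $b\in V(G)$. The flooding number $\tilde{\nu}(G,\gamma,b)$ is the maximum size of a circuit-decomposition of $G$ in which every circuit is non-zero and hits $b$; it is $0$ if no such decomposition exists. For $X\subseteq V(G)$, $E(X)$ is the set of edges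 with both ends in $X$, and $\delta(X)$ is the set of edges with exactly one end in $X$. For an edge set $F$, $\gamma'(F)$ denotes the number of edges of $F$ with weight $1$ under $\gamma'$. A vertex set $Y$ is $\gamma'$-odd if the parity of $\gamma'(E(Y)\cup\delta(Y))$ differs from the parity of $|\delta(Y)|/2$. Finally, $\mathrm{odd}_{\gamma'}(G-X)$ is the number of components of $G-X$ whose vertex set is $\gamma'$-odd. *)

theory Defs
  imports Complex_Main "HOL-Library.Z2"
begin

text \<open>
A finite multigraph with loops is given by a vertex set V, an edge set E and an
end map ep :: 'e => bool => 'v.  Edge e has two half-edges (e,False) and (e,True),
incident to ep e False and ep e True respectively; a loop has ep e False = ep e True.
An arc is represented by a pair (e,d): it is the ordered pair of half-edges
((e,d),(e, not d)); its tail is ep e d and its head is ep e (not d).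
\<close>

definition graph :: "'v set \<Rightarrow> 'e set \<Rightarrow> ('e \<Rightarrow> bool \<Rightarrow> 'v) \<Rightarrow> bool" where
  "graph V E ep \<longleftrightarrow> finite V \<and> finite E \<and> (\<forall>e\<in>E. \<forall>d. ep e d \<in> V)"

definition is_loop :: "('e \<Rightarrow> bool \<Rightarrow> 'v) \<Rightarrow> 'e \<Rightarrow> bool" where
  "is_loop ep e \<longleftrightarrow> ep e False = ep e True"

text \<open>degree = number of half-edges at v (a loop counts twice)\<close>
definition degree :: "'e set \<Rightarrow> ('e \<Rightarrow> bool \<Rightarrow> 'v) \<Rightarrow> 'v \<Rightarrow> nat" where
  "degree E ep v = card {(e, d). e \<in> E \<and> ep e d = v}"

definition adj_in :: "'v set \<Rightarrow> 'e set \<Rightarrow> ('e \<Rightarrow> bool \<Rightarrow> 'v) \<Rightarrow> ('v \<times> 'v) set" where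
  "adj_in W E ep = {(ep e d, ep e (\<not> d)) | e d. e \<in> E \<and> ep e False \<in> W \<and> ep e True \<in> W}"

definition connected_graph :: "'v set \<Rightarrow> 'e set \<Rightarrow> ('e \<Rightarrow> bool \<Rightarrow> 'v) \<Rightarrow> bool" where
  "connected_graph V E ep \<longleftrightarrow> V \<noteq> {} \<and> (\<forall>u\<in>V. \<forall>v\<in>V. (u, v) \<in> (adj_in V E ep)\<^sup>*)"

definition eulerian :: "'v set \<Rightarrow> 'e set \<Rightarrow> ('e \<Rightarrow> bool \<Rightarrow> 'v) \<Rightarrow> bool" where
  "eulerian V E ep \<longleftrightarrow> graph V E ep \<and> connected_graph V E ep \<and> (\<forall>v\<in>V. even (degree E ep v))"

definition tail :: "('e \<Rightarrow> bool \<Rightarrow> 'v) \<Rightarrow> 'e \<times> bool \<Rightarrow> 'v" where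
  "tail ep a = ep (fst a) (snd a)"

definition head :: "('e \<Rightarrow> bool \<Rightarrow> 'v) \<Rightarrow> 'e \<times> bool \<Rightarrow> 'v" where
  "head ep a = ep (fst a) (\<not> snd a)"

definition trail :: "'e set \<Rightarrow> ('e \<Rightarrow> bool \<Rightarrow> 'v) \<Rightarrow> ('e \<times> bool) list \<Rightarrow> bool" where
  "trail E ep T \<longleftrightarrow> set (map fst T) \<subseteq> E \<and> distinct (map fst T) \<and>
     (\<forall>i. Suc i < length T \<longrightarrow> head ep (T ! i) = tail ep (T ! Suc i))"

definition circuit :: "'e set \<Rightarrow> ('e \<Rightarrow> bool \<Rightarrow> 'v) \<Rightarrow> ('e \<times> bool) list \<Rightarrow> bool" where
  "circuit E ep T \<longleftrightarrow> trail E ep T \<and> T \<noteq> [] \<and> head ep (last T) = tail ep (hd T)"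

definition hits :: "('e \<Rightarrow> bool \<Rightarrow> 'v) \<Rightarrow> ('e \<times> bool) list \<Rightarrow> 'v \<Rightarrow> bool" where
  "hits ep T v \<longleftrightarrow> (\<exists>a\<in>set T. tail ep a = v \<or> head ep a = v)"

definition circuit_decomposition :: "'e set \<Rightarrow> ('e \<Rightarrow> bool \<Rightarrow> 'v) \<Rightarrow> ('e \<times> bool) list list \<Rightarrow> bool" where
  "circuit_decomposition E ep Cs \<longleftrightarrow> (\<forall>C\<in>set Cs. circuit E ep C) \<and>
     (\<forall>e\<in>E. \<exists>!i. i < length Cs \<and> e \<in> fst ` set (Cs ! i))"

definition weight :: "('e \<Rightarrow> bit) \<Rightarrow> ('e \<times> bool) list \<Rightarrow> bit" where
  "weight \<gamma> T = sum_list (map (\<lambda>a. \<gamma> (fst a)) T)"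

definition flooding_number ::
  "'v set \<Rightarrow> 'e set \<Rightarrow> ('e \<Rightarrow> bool \<Rightarrow> 'v) \<Rightarrow> ('e \<Rightarrow> bit) \<Rightarrow> 'v \<Rightarrow> nat" where
  "flooding_number V E ep \<gamma> b = Max ({0} \<union> {length Cs | Cs. circuit_decomposition E ep Cs \<and>
      (\<forall>C\<in>set Cs. weight \<gamma> C \<noteq> 0 \<and> hits ep C b)})"

definition shift_at :: "'e set \<Rightarrow> ('e \<Rightarrow> bool \<Rightarrow> 'v) \<Rightarrow> 'v \<Rightarrow> ('e \<Rightarrow> bit) \<Rightarrow> ('e \<Rightarrow> bit)" where
  "shift_at E ep v \<gamma> = (\<lambda>e. if e \<in> E \<and> \<not> is_loop ep e \<and> (ep e False = v \<or> ep e True = v)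
                           then \<gamma> e + 1 else \<gamma> e)"

inductive is_shifting :: "'v set \<Rightarrow> 'e set \<Rightarrow> ('e \<Rightarrow> bool \<Rightarrow> 'v) \<Rightarrow> ('e \<Rightarrow> bit) \<Rightarrow> ('e \<Rightarrow> bit) \<Rightarrow> bool"
  for V E ep \<gamma> where
  refl: "is_shifting V E ep \<gamma> \<gamma>"
| step: "is_shifting V E ep \<gamma> \<gamma>' \<Longrightarrow> v \<in> V \<Longrightarrow> is_shifting V E ep \<gamma> (shift_at E ep v \<gamma>')"

definition E_in :: "'e set \<Rightarrow> ('e \<Rightarrow> bool \<Rightarrow> 'v) \<Rightarrow> 'v set \<Rightarrow> 'e set" where
  "E_in E ep X = {e \<in> E. ep e False \<in> X \<and> ep e True \<in> X}"

definition delta :: "'e set \<Rightarrow> ('e \<Rightarrow> bool \<Rightarrow> 'v) \<Rightarrow> 'v set \<Rightarrow> 'e set" where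
  "delta E ep X = {e \<in> E. (ep e False \<in> X) \<noteq> (ep e True \<in> X)}"

definition wcount :: "('e \<Rightarrow> bit) \<Rightarrow> 'e set \<Rightarrow> nat" where
  "wcount \<gamma> F = card {e \<in> F. \<gamma> e = 1}"

definition odd_set :: "'e set \<Rightarrow> ('e \<Rightarrow> bool \<Rightarrow> 'v) \<Rightarrow> ('e \<Rightarrow> bit) \<Rightarrow> 'v set \<Rightarrow> bool" where
  "odd_set E ep \<gamma> Y \<longleftrightarrow>
     odd (wcount \<gamma> (E_in E ep Y \<union> delta E ep Y)) \<noteq> odd (card (delta E ep Y) div 2)"

definition components_minus :: "'v set \<Rightarrow> 'e set \<Rightarrow> ('e \<Rightarrow> bool \<Rightarrow> 'v) \<Rightarrow> 'v set \<Rightarrow> 'v set set" where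
  "components_minus V E ep X =
     {{u \<in> V - X. (v, u) \<in> (adj_in (V - X) E ep)\<^sup>*} | v. v \<in> V - X}"

definition odd_components :: "'v set \<Rightarrow> 'e set \<Rightarrow> ('e \<Rightarrow> bool \<Rightarrow> 'v) \<Rightarrow> ('e \<Rightarrow> bit) \<Rightarrow> 'v set \<Rightarrow> nat" where
  "odd_components V E ep \<gamma> X = card {C \<in> components_minus V E ep X. odd_set E ep \<gamma> C}"

end

(*
  Shifting at a vertex v changes the weight of a circuit by the number of its edges in
  delta {v}, which is even because a circuit crosses every cut an even number of times;
  hence every circuit of a flooding keeps non-zero weight under the shifted signature.

  For an edge set F and a component K of G - X, call
  wcount (F \<inter> (E(K) \<union> delta K)) + |F \<inter> delta K| / 2 the charge of F on K.  For F = E its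
  parity is exactly what makes K odd, and it is additive over the circuits of a
  decomposition, so every odd component has odd charge on some circuit.  A circuit through
  b on which all components of a set S have odd charge satisfies
  2 + 2|S| \<le> 2 wcount (C \<inter> E(X)) + |C \<inter> delta X|: every such component is crossed at least
  twice, and if all these estimates were tight, the charges of C, all odd, would add up
  to wcount C + |S|, forcing C to have even weight.  Summing over the
  circuits of a flooding gives the bound; without any flooding, the handshake lemma still
  gives 2 odd(G - X) \<le> |delta X|.
*)

theory Submission
  imports Defs
begin

lemma of_nat_bit_eq_0_iff: "(of_nat n :: bit) = 0 \<longleftrightarrow> even n"
  by (metis Z2.bit_eq_iff even_of_nat even_zero)

lemma sum_list_rotate1: "sum_list (rotate1 xs) = sum_list (xs :: 'a::comm_monoid_add list)"
  by (cases xs) (simp_all add: add.commute)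

lemma sum_UNIV_bool: "(\<Sum>d\<in>UNIV. f d) = f False + (f True :: 'a::comm_monoid_add)"
  by (simp add: UNIV_bool add.commute)

lemma two_le_even_nat: "even (n::nat) \<Longrightarrow> n \<noteq> 0 \<Longrightarrow> 2 \<le> n"
  by (elim evenE) simp

lemma sum_div_dvd_nat:
  assumes "\<And>i. i \<in> I \<Longrightarrow> c dvd f i"
  shows "(\<Sum>i\<in>I. f i) div c = (\<Sum>i\<in>I. f i div (c::nat))"
proof -
  have "(\<Sum>i\<in>I. f i) = c * (\<Sum>i\<in>I. f i div c)"
    unfolding sum_distrib_left using assms by (intro sum.cong) simp_all
  then show ?thesis by (cases "c = 0") simp_all
qed

lemma card_UN_Int:
  assumes "finite I" "\<And>i. i \<in> I \<Longrightarrow> finite (F i)"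
    and "\<And>i j. i \<in> I \<Longrightarrow> j \<in> I \<Longrightarrow> i \<noteq> j \<Longrightarrow> F i \<inter> F j = {}"
  shows "card ((\<Union>i\<in>I. F i) \<inter> B) = (\<Sum>i\<in>I. card (F i \<inter> B))"
proof -
  have "(\<Union>i\<in>I. F i) \<inter> B = (\<Union>i\<in>I. F i \<inter> B)" by blast
  also have "card \<dots> = (\<Sum>i\<in>I. card (F i \<inter> B))"
    using assms by (intro card_UN_disjoint) blast+
  finally show ?thesis .
qed

lemma rtrancl_exits_set:
  "(x, y) \<in> r\<^sup>* \<Longrightarrow> x \<in> A \<Longrightarrow> y \<notin> A \<Longrightarrow> \<exists>p q. (p, q) \<in> r \<and> p \<in> A \<and> q \<notin> A"
  by (induction rule: rtrancl_induct) auto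

section \<open>Edge sets of vertex sets\<close>

lemma E_in_subset: "E_in E ep Y \<subseteq> E"
  unfolding E_in_def by blast

lemma delta_subset: "delta E ep Y \<subseteq> E"
  unfolding delta_def by blast

lemma E_in_end: "e \<in> E_in E ep Y \<Longrightarrow> ep e d \<in> Y"
  unfolding E_in_def by (cases d) auto

lemma deltaI: "e \<in> E \<Longrightarrow> ep e d \<in> Y \<Longrightarrow> ep e (\<not> d) \<notin> Y \<Longrightarrow> e \<in> delta E ep Y"
  unfolding delta_def by (cases d) auto

lemma deltaE:
  assumes "e \<in> delta E ep Y"
  obtains d where "e \<in> E" "ep e d \<in> Y" "ep e (\<not> d) \<notin> Y"
proof (cases "ep e False \<in> Y")
  case True
  then show ?thesis using that[of False] assms unfolding delta_def by simp
next
  case False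
  then show ?thesis using that[of True] assms unfolding delta_def by simp
qed

lemma of_bool_delta:
  "e \<in> E \<Longrightarrow> (of_bool (e \<in> delta E ep Y) :: bit) = of_bool (ep e d \<in> Y) + of_bool (ep e (\<not> d) \<in> Y)"
  by (cases d) (auto simp: delta_def)

definition incident_edges :: "'e set \<Rightarrow> ('e \<Rightarrow> bool \<Rightarrow> 'v) \<Rightarrow> 'v set \<Rightarrow> 'e set" where
  "incident_edges E ep Y = {e \<in> E. \<exists>d. ep e d \<in> Y}"

lemma incident_edges_eq: "incident_edges E ep Y = E_in E ep Y \<union> delta E ep Y"
  unfolding incident_edges_def E_in_def delta_def by (auto simp: ex_bool_eq)

lemma delta_subset_incident_edges: "delta E ep Y \<subseteq> incident_edges E ep Y"
  unfolding incident_edges_eq by blast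

lemma wcount_Int: "wcount \<gamma> (A \<inter> B) = card ({e \<in> A. \<gamma> e = 1} \<inter> B)"
  unfolding wcount_def by (rule arg_cong[where f = card]) blast

lemma wcount_UN_Int:
  assumes "finite I" "\<And>i. i \<in> I \<Longrightarrow> finite (F i)"
    and "\<And>i j. i \<in> I \<Longrightarrow> j \<in> I \<Longrightarrow> i \<noteq> j \<Longrightarrow> F i \<inter> F j = {}"
  shows "wcount \<gamma> ((\<Union>i\<in>I. F i) \<inter> B) = (\<Sum>i\<in>I. wcount \<gamma> (F i \<inter> B))"
proof -
  have "wcount \<gamma> ((\<Union>i\<in>I. F i) \<inter> B) = card ((\<Union>i\<in>I. F i) \<inter> {e \<in> B. \<gamma> e = 1})"
    unfolding wcount_def by (rule arg_cong[where f = card]) blast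
  also have "\<dots> = (\<Sum>i\<in>I. card (F i \<inter> {e \<in> B. \<gamma> e = 1}))"
    by (rule card_UN_Int[OF assms])
  also have "\<dots> = (\<Sum>i\<in>I. wcount \<gamma> (F i \<inter> B))"
    unfolding wcount_def by (rule sum.cong[OF HOL.refl], rule arg_cong[where f = card]) blast
  finally show ?thesis .
qed

lemma even_card_delta:
  assumes E: "finite E" and Y: "finite Y" and deg: "\<And>v. v \<in> Y \<Longrightarrow> even (degree E ep v)"
  shows "even (card (delta E ep Y))"
proof -
  let ?H = "\<Union>v \<in> Y. {(e, d). e \<in> E \<and> ep e d = v}"
  have "(of_nat (card (delta E ep Y)) :: bit) = (\<Sum>e\<in>E. of_bool (e \<in> delta E ep Y))"
    using E delta_subset[of E ep Y] by (simp add: Int_absorb1 Int_def[symmetric])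
  also have "\<dots> = (\<Sum>e\<in>E. \<Sum>d\<in>UNIV. of_bool (ep e d \<in> Y))"
  proof (rule sum.cong[OF HOL.refl])
    fix e assume "e \<in> E"
    then show "(of_bool (e \<in> delta E ep Y) :: bit) = (\<Sum>d\<in>UNIV. of_bool (ep e d \<in> Y))"
      unfolding sum_UNIV_bool using of_bool_delta[of e E ep Y False] by (simp only: not_False_eq_True)
  qed
  also have "\<dots> = (\<Sum>p\<in>E \<times> UNIV. of_bool (ep (fst p) (snd p) \<in> Y))"
    by (simp only: sum.cartesian_product split_beta')
  also have "\<dots> = of_nat (card ((E \<times> UNIV) \<inter> {p. ep (fst p) (snd p) \<in> Y}))"
    using E by (intro sum_of_bool_eq finite_cartesian_product) simp_all
  also have "(E \<times> UNIV) \<inter> {p. ep (fst p) (snd p) \<in> Y} = ?H"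
    by auto
  also have "card ?H = (\<Sum>v\<in>Y. degree E ep v)"
    unfolding degree_def
  proof (rule card_UN_disjoint[OF Y])
    show "\<forall>v\<in>Y. finite {(e, d). e \<in> E \<and> ep e d = v}"
      using E by (auto intro: finite_subset[of _ "E \<times> UNIV"])
  qed blast
  finally have "(of_nat (card (delta E ep Y)) :: bit) = of_nat (\<Sum>v\<in>Y. degree E ep v)" .
  also have "(of_nat (\<Sum>v\<in>Y. degree E ep v) :: bit) = 0"
    unfolding of_nat_bit_eq_0_iff using deg by (intro dvd_sum) simp
  finally show ?thesis unfolding of_nat_bit_eq_0_iff .
qed

section \<open>Circuits\<close>

abbreviation trail_edges :: "('e \<times> bool) list \<Rightarrow> 'e set" where
  "trail_edges T \<equiv> fst ` set T"

lemma circuit_trail: "circuit E ep C \<Longrightarrow> trail E ep C"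
  unfolding circuit_def by simp

lemma trail_edges_subset: "trail E ep T \<Longrightarrow> trail_edges T \<subseteq> E"
  unfolding trail_def by simp

lemma sum_list_trail_edges:
  assumes "trail E ep T"
  shows "(\<Sum>a\<leftarrow>T. f (fst a)) = sum f (trail_edges T)"
proof -
  have "distinct (map fst T)" using assms unfolding trail_def by simp
  then have "sum_list (map f (map fst T)) = sum f (set (map fst T))"
    by (rule sum_list_distinct_conv_sum_set)
  then show ?thesis by (simp add: o_def)
qed

lemma weight_eq_sum: "trail E ep T \<Longrightarrow> weight \<gamma> T = sum \<gamma> (trail_edges T)"
  unfolding weight_def by (rule sum_list_trail_edges)

lemma weight_eq_0_iff:
  assumes "trail E ep T"
  shows "weight \<gamma> T = 0 \<longleftrightarrow> even (wcount \<gamma> (trail_edges T))"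
proof -
  have "weight \<gamma> T = (\<Sum>e\<in>trail_edges T. of_bool (\<gamma> e = 1))"
    unfolding weight_eq_sum[OF assms]
  proof (rule sum.cong[OF HOL.refl])
    show "\<gamma> e = of_bool (\<gamma> e = 1)" for e by (cases "\<gamma> e") simp_all
  qed
  also have "\<dots> = of_nat (card (trail_edges T \<inter> {e. \<gamma> e = 1}))"
    by (intro sum_of_bool_eq finite_imageI finite_set)
  also have "trail_edges T \<inter> {e. \<gamma> e = 1} = {e \<in> trail_edges T. \<gamma> e = 1}"
    by blast
  finally have "weight \<gamma> T = of_nat (wcount \<gamma> (trail_edges T))"
    unfolding wcount_def .
  then show ?thesis by (simp add: of_nat_bit_eq_0_iff)
qed

lemma circuit_heads_eq_rotate1_tails:
  assumes "circuit E ep C"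
  shows "map (head ep) C = rotate1 (map (tail ep) C)"
proof (rule nth_equalityI)
  have ne: "C \<noteq> []" and closed: "head ep (last C) = tail ep (hd C)"
    and step: "\<And>i. Suc i < length C \<Longrightarrow> head ep (C ! i) = tail ep (C ! Suc i)"
    using assms unfolding circuit_def trail_def by auto
  fix i assume "i < length (map (head ep) C)"
  then have i: "i < length C" by simp
  have rot: "rotate1 (map (tail ep) C) ! i = tail ep (C ! (Suc i mod length C))"
    using i ne by (simp add: nth_rotate1)
  show "map (head ep) C ! i = rotate1 (map (tail ep) C) ! i"
  proof (cases "Suc i < length C")
    case True
    then show ?thesis using rot step by simp
  next
    case False
    then have "Suc i = length C" using i by simp
    then have "i = length C - 1" "Suc i mod length C = 0" by simp_all
    then have "C ! i = last C" "rotate1 (map (tail ep) C) ! i = tail ep (hd C)"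
      using ne rot by (simp_all add: last_conv_nth hd_conv_nth)
    then show ?thesis using closed i by simp
  qed
qed simp

lemma circuit_sum_heads_eq_sum_tails:
  assumes "circuit E ep C"
  shows "(\<Sum>a\<leftarrow>C. f (head ep a)) = (\<Sum>a\<leftarrow>C. (f (tail ep a) :: 'a::comm_monoid_add))"
proof -
  have "map (\<lambda>a. f (head ep a)) C = map f (map (head ep) C)"
    by simp
  also have "\<dots> = rotate1 (map (\<lambda>a. f (tail ep a)) C)"
    unfolding circuit_heads_eq_rotate1_tails[OF assms] by (simp add: rotate1_map)
  finally show ?thesis by (simp add: sum_list_rotate1)
qed

lemma even_card_circuit_delta:
  assumes C: "circuit E ep C"
  shows "even (card (trail_edges C \<inter> delta E ep Y))"
proof -
  have T: "trail E ep C" using C unfolding circuit_def by simp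
  have "(of_nat (card (trail_edges C \<inter> delta E ep Y)) :: bit)
      = (\<Sum>e\<in>trail_edges C. of_bool (e \<in> delta E ep Y))"
    by (simp add: Int_def)
  also have "\<dots> = (\<Sum>a\<leftarrow>C. of_bool (fst a \<in> delta E ep Y))"
    by (rule sum_list_trail_edges[OF T, symmetric])
  also have "\<dots> = (\<Sum>a\<leftarrow>C. of_bool (tail ep a \<in> Y) + of_bool (head ep a \<in> Y))"
  proof (rule arg_cong[where f = sum_list], rule map_cong[OF HOL.refl])
    fix a assume "a \<in> set C"
    then have "fst a \<in> E" using trail_edges_subset[OF T] by auto
    then show "(of_bool (fst a \<in> delta E ep Y) :: bit) = of_bool (tail ep a \<in> Y) + of_bool (head ep a \<in> Y)"
      using of_bool_delta[of "fst a" E ep Y "snd a"] by (simp add: tail_def head_def)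
  qed
  also have "\<dots> = (\<Sum>a\<leftarrow>C. of_bool (tail ep a \<in> Y)) + (\<Sum>a\<leftarrow>C. of_bool (head ep a \<in> Y))"
    by (rule sum_list_addf)
  also have "\<dots> = 0"
    by (simp only: circuit_sum_heads_eq_sum_tails[OF C, of "\<lambda>v. of_bool (v \<in> Y)"]) simp
  finally show ?thesis by (simp add: of_nat_bit_eq_0_iff)
qed

lemma shift_at_eq:
  "e \<in> E \<Longrightarrow> shift_at E ep v \<gamma> e = \<gamma> e + of_bool (e \<in> delta E ep {v})"
  unfolding shift_at_def delta_def is_loop_def
  by (cases "ep e False = v"; cases "ep e True = v") simp_all

lemma weight_shift_at:
  assumes C: "circuit E ep C"
  shows "weight (shift_at E ep v \<gamma>) C = weight \<gamma> C"
proof -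
  have T: "trail E ep C" using C unfolding circuit_def by simp
  have "weight (shift_at E ep v \<gamma>) C
      = (\<Sum>e\<in>trail_edges C. \<gamma> e + of_bool (e \<in> delta E ep {v}))"
    unfolding weight_eq_sum[OF T]
  proof (rule sum.cong[OF HOL.refl])
    fix e assume "e \<in> trail_edges C"
    then have "e \<in> E" using trail_edges_subset[OF T] by blast
    then show "shift_at E ep v \<gamma> e = \<gamma> e + of_bool (e \<in> delta E ep {v})"
      by (rule shift_at_eq)
  qed
  also have "\<dots> = weight \<gamma> C + (\<Sum>e\<in>trail_edges C. of_bool (e \<in> delta E ep {v}))"
    by (simp only: sum.distrib weight_eq_sum[OF T])
  also have "(\<Sum>e\<in>trail_edges C. of_bool (e \<in> delta E ep {v})) = (of_nat (card (trail_edges C \<inter> delta E ep {v})) :: bit)"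
    by (simp add: Int_def)
  also have "\<dots> = 0"
    using even_card_circuit_delta[OF C] by (simp add: of_nat_bit_eq_0_iff)
  finally show ?thesis by (simp only: add_0_right)
qed

lemma weight_shifting:
  "is_shifting V E ep \<gamma> \<gamma>' \<Longrightarrow> circuit E ep C \<Longrightarrow> weight \<gamma>' C = weight \<gamma> C"
  by (induction rule: is_shifting.induct) (simp_all add: weight_shift_at)

lemma tail_mem_iff_head_mem:
  "fst a \<in> E \<Longrightarrow> fst a \<notin> delta E ep Y \<Longrightarrow> tail ep a \<in> Y \<longleftrightarrow> head ep a \<in> Y"
  unfolding tail_def head_def delta_def by (cases "snd a") auto

lemma circuit_tail_mem_iff:
  assumes C: "circuit E ep C" and no_cut: "trail_edges C \<inter> delta E ep Y = {}"
    and "a \<in> set C" "a' \<in> set C"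
  shows "tail ep a \<in> Y \<longleftrightarrow> tail ep a' \<in> Y"
proof -
  have arc: "tail ep (C ! i) \<in> Y \<longleftrightarrow> head ep (C ! i) \<in> Y" if "i < length C" for i
    using that no_cut trail_edges_subset[OF circuit_trail[OF C]]
    by (intro tail_mem_iff_head_mem[where E = E]) (auto intro: nth_mem)
  have step: "head ep (C ! i) = tail ep (C ! Suc i)" if "Suc i < length C" for i
    using C that unfolding circuit_def trail_def by blast
  have first: "tail ep (C ! i) \<in> Y \<longleftrightarrow> tail ep (C ! 0) \<in> Y" if "i < length C" for i
    using that
  proof (induction i)
    case (Suc i)
    then show ?case using arc[of i] step[of i] by simp
  qed simp
  show ?thesis using first \<open>a \<in> set C\<close> \<open>a' \<in> set C\<close> by (metis in_set_conv_nth)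
qed

lemma circuit_edges_disjoint_incident_edges:
  assumes C: "circuit E ep C" and "hits ep C b" and "b \<notin> Y"
    and no_cut: "trail_edges C \<inter> delta E ep Y = {}"
  shows "trail_edges C \<inter> incident_edges E ep Y = {}"
proof -
  have arc: "tail ep a \<in> Y \<longleftrightarrow> head ep a \<in> Y" if "a \<in> set C" for a
    using that no_cut trail_edges_subset[OF circuit_trail[OF C]]
    by (intro tail_mem_iff_head_mem[where E = E]) auto
  from \<open>hits ep C b\<close> obtain a0 where a0: "a0 \<in> set C" "tail ep a0 \<notin> Y"
    unfolding hits_def using arc \<open>b \<notin> Y\<close> by blast
  have outside: "tail ep a \<notin> Y" if "a \<in> set C" for a
    using circuit_tail_mem_iff[OF C no_cut that a0(1)] a0(2) by simp
  have "ep e d \<notin> Y" if e: "e \<in> trail_edges C" for e d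
  proof -
    obtain a where a: "a \<in> set C" "e = fst a" using e by blast
    then have "tail ep a \<notin> Y" "head ep a \<notin> Y" using outside arc by auto
    then show ?thesis unfolding tail_def head_def a(2) by (cases "d = snd a") auto
  qed
  then show ?thesis unfolding incident_edges_def by blast
qed

section \<open>Components of G - X\<close>

lemma sym_adj_in: "sym (adj_in W E ep)"
proof (rule symI)
  fix x y assume "(x, y) \<in> adj_in W E ep"
  then obtain e d where "x = ep e d" "y = ep e (\<not> d)" "e \<in> E" "ep e False \<in> W" "ep e True \<in> W"
    unfolding adj_in_def by blast
  then show "(y, x) \<in> adj_in W E ep"
    unfolding adj_in_def by (intro CollectI exI[of _ e] exI[of _ "\<not> d"]) simp
qed

lemma component_eq:
  assumes "K \<in> components_minus V E ep X" "x \<in> K"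
  shows "K = {u \<in> V - X. (x, u) \<in> (adj_in (V - X) E ep)\<^sup>*}"
proof -
  obtain v where K: "K = {u \<in> V - X. (v, u) \<in> (adj_in (V - X) E ep)\<^sup>*}"
    using assms(1) unfolding components_minus_def by blast
  let ?R = "(adj_in (V - X) E ep)\<^sup>*"
  have vx: "(v, x) \<in> ?R" using assms(2) K by blast
  moreover have "sym ?R" by (intro sym_rtrancl sym_adj_in)
  ultimately have xv: "(x, v) \<in> ?R" by (rule symD[rotated])
  have "(v, u) \<in> ?R \<longleftrightarrow> (x, u) \<in> ?R" for u
    using rtrancl_trans[OF vx] rtrancl_trans[OF xv] by blast
  then show ?thesis unfolding K by blast
qed

lemma component_subset: "K \<in> components_minus V E ep X \<Longrightarrow> K \<subseteq> V - X"
  unfolding components_minus_def by blast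

lemma components_eqI:
  "K \<in> components_minus V E ep X \<Longrightarrow> K' \<in> components_minus V E ep X \<Longrightarrow> x \<in> K \<Longrightarrow> x \<in> K'
    \<Longrightarrow> K = K'"
  using component_eq[of K V E ep X x] component_eq[of K' V E ep X x] by simp

lemma component_exists:
  assumes "u \<in> V - X"
  shows "\<exists>K \<in> components_minus V E ep X. u \<in> K"
proof
  let ?K = "{w \<in> V - X. (u, w) \<in> (adj_in (V - X) E ep)\<^sup>*}"
  show "?K \<in> components_minus V E ep X" unfolding components_minus_def using assms by blast
  show "u \<in> ?K" using assms by simp
qed

lemma component_nonempty: "K \<in> components_minus V E ep X \<Longrightarrow> K \<noteq> {}"
  unfolding components_minus_def by auto

lemma finite_components_minus: "finite V \<Longrightarrow> finite (components_minus V E ep X)"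
proof -
  assume "finite V"
  moreover have "components_minus V E ep X \<subseteq> Pow V" using component_subset by blast
  ultimately show ?thesis by (meson finite_Pow_iff finite_subset)
qed

lemma component_edge_closed:
  assumes K: "K \<in> components_minus V E ep X" and "e \<in> E" "ep e d \<in> K" "ep e d' \<in> V - X"
  shows "ep e d' \<in> K"
proof (cases "d' = d")
  case False
  then have d': "d' = (\<not> d)" by simp
  have "ep e d \<in> V - X" using assms(3) component_subset[OF K] by blast
  then have "ep e False \<in> V - X \<and> ep e True \<in> V - X" using assms(4) d' by (cases d) simp_all
  then have "(ep e d, ep e d') \<in> adj_in (V - X) E ep"
    unfolding adj_in_def d' using \<open>e \<in> E\<close> by blast
  then show ?thesis using component_eq[OF K assms(3)] assms(4) by auto
qed (use assms in simp)

lemma components_share_edge: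
  assumes K: "K \<in> components_minus V E ep X" and K': "K' \<in> components_minus V E ep X"
    and "e \<in> E" "ep e d \<in> K" "ep e d' \<in> K'"
  shows "K = K'"
proof -
  have "ep e d' \<in> K"
    using component_edge_closed[OF K assms(3,4)] assms(5) component_subset[OF K'] by blast
  then show ?thesis using components_eqI[OF K K'] assms(5) by blast
qed

lemma incident_edges_components_disjoint:
  "K \<in> components_minus V E ep X \<Longrightarrow> K' \<in> components_minus V E ep X \<Longrightarrow> K \<noteq> K'
    \<Longrightarrow> incident_edges E ep K \<inter> incident_edges E ep K' = {}"
  unfolding incident_edges_def by (auto dest: components_share_edge)

lemma E_in_disjoint_incident_component:
  assumes "K \<in> components_minus V E ep X"
  shows "E_in E ep X \<inter> incident_edges E ep K = {}"
  using component_subset[OF assms] E_in_end unfolding incident_edges_def by fastforce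

lemma delta_component_subset:
  assumes g: "graph V E ep" and K: "K \<in> components_minus V E ep X"
  shows "delta E ep K \<subseteq> delta E ep X"
proof
  fix e assume "e \<in> delta E ep K"
  then obtain d where d: "e \<in> E" "ep e d \<in> K" "ep e (\<not> d) \<notin> K" by (rule deltaE)
  have "ep e (\<not> d) \<in> V" using g \<open>e \<in> E\<close> unfolding graph_def by blast
  then have "ep e (\<not> d) \<in> X" using component_edge_closed[OF K d(1,2)] d(3) by blast
  moreover have "ep e d \<notin> X" using d(2) component_subset[OF K] by blast
  ultimately show "e \<in> delta E ep X" using d(1) deltaI[of e E ep "\<not> d" X] by simp
qed

lemma edges_eq_E_in_Un_components:
  assumes g: "graph V E ep"
  shows "E = E_in E ep X \<union> (\<Union>K \<in> components_minus V E ep X. incident_edges E ep K)"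
proof -
  have "e \<in> (\<Union>K \<in> components_minus V E ep X. incident_edges E ep K)"
    if e: "e \<in> E" "e \<notin> E_in E ep X" for e
  proof -
    obtain d where "ep e d \<notin> X" using e unfolding E_in_def by auto
    moreover have "ep e d \<in> V" using g e(1) unfolding graph_def by blast
    ultimately obtain K where "K \<in> components_minus V E ep X" "ep e d \<in> K"
      using component_exists[of "ep e d" V X E ep] by blast
    then show ?thesis using e(1) unfolding incident_edges_def by blast
  qed
  moreover have "E_in E ep X \<subseteq> E" "incident_edges E ep K \<subseteq> E" for K
    unfolding E_in_def incident_edges_def by auto
  ultimately show ?thesis by blast
qed

lemma delta_eq_UN_components:
  assumes g: "graph V E ep"
  shows "delta E ep X = (\<Union>K \<in> components_minus V E ep X. delta E ep K)"
proof -
  have "e \<in> (\<Union>K \<in> components_minus V E ep X. delta E ep K)" if "e \<in> delta E ep X" for e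
  proof -
    obtain d where d: "e \<in> E" "ep e d \<in> X" "ep e (\<not> d) \<notin> X"
      using \<open>e \<in> delta E ep X\<close> by (rule deltaE)
    have "ep e (\<not> d) \<in> V" using g d(1) unfolding graph_def by blast
    then obtain K where K: "K \<in> components_minus V E ep X" "ep e (\<not> d) \<in> K"
      using component_exists[of "ep e (\<not> d)" V X E ep] d(3) by blast
    have "ep e d \<notin> K" using d(2) component_subset[OF K(1)] by blast
    then have "e \<in> delta E ep K" using deltaI[of e E ep "\<not> d" K] K(2) d(1) by simp
    then show ?thesis using K(1) by blast
  qed
  then show ?thesis using delta_component_subset[OF g] by blast
qed

lemma card_edges_split:
  assumes g: "graph V E ep" and A: "A \<subseteq> E"
  shows "card A = card (A \<inter> E_in E ep X)
                 + (\<Sum>K \<in> components_minus V E ep X. card (A \<inter> incident_edges E ep K))"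
proof -
  let ?comps = "components_minus V E ep X"
  let ?U = "\<Union>K \<in> ?comps. A \<inter> incident_edges E ep K"
  have "finite E" "finite V" using g unfolding graph_def by simp_all
  then have finA: "finite A" and finC: "finite ?comps"
    using A by (simp_all add: finite_subset finite_components_minus)
  have "A = (A \<inter> E_in E ep X) \<union> ?U"
    using edges_eq_E_in_Un_components[OF g, of X] A by blast
  then have "card A = card ((A \<inter> E_in E ep X) \<union> ?U)" by (rule arg_cong)
  also have "\<dots> = card (A \<inter> E_in E ep X) + card ?U"
  proof (rule card_Un_disjoint)
    show "finite (A \<inter> E_in E ep X)" "finite ?U"
      using finA by (simp_all add: finite_subset[of ?U A])
    show "A \<inter> E_in E ep X \<inter> ?U = {}"
      using E_in_disjoint_incident_component[of _ V E ep X] by fast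
  qed
  also have "card ?U = (\<Sum>K \<in> ?comps. card (A \<inter> incident_edges E ep K))"
  proof (rule card_UN_disjoint[OF finC])
    show "\<forall>K\<in>?comps. finite (A \<inter> incident_edges E ep K)" using finA by simp
    show "\<forall>K\<in>?comps. \<forall>K'\<in>?comps. K \<noteq> K' \<longrightarrow>
        A \<inter> incident_edges E ep K \<inter> (A \<inter> incident_edges E ep K') = {}"
      using incident_edges_components_disjoint[of _ V E ep X] by fast
  qed
  finally show ?thesis .
qed

lemma card_delta_split:
  assumes g: "graph V E ep"
  shows "card (A \<inter> delta E ep X) = (\<Sum>K \<in> components_minus V E ep X. card (A \<inter> delta E ep K))"
proof -
  let ?comps = "components_minus V E ep X"
  have "finite E" "finite V" using g unfolding graph_def by simp_all
  have finD: "finite (A \<inter> delta E ep K)" for K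
    by (intro finite_Int disjI2 finite_subset[OF delta_subset \<open>finite E\<close>])
  have finC: "finite ?comps" using \<open>finite V\<close> by (rule finite_components_minus)
  have "A \<inter> delta E ep X = (\<Union>K \<in> ?comps. A \<inter> delta E ep K)"
    using delta_eq_UN_components[OF g, of X] by blast
  also have "card \<dots> = (\<Sum>K \<in> ?comps. card (A \<inter> delta E ep K))"
  proof (rule card_UN_disjoint[OF finC])
    show "\<forall>K\<in>?comps. finite (A \<inter> delta E ep K)" using finD by blast
    show "\<forall>K\<in>?comps. \<forall>K'\<in>?comps. K \<noteq> K' \<longrightarrow> A \<inter> delta E ep K \<inter> (A \<inter> delta E ep K') = {}"
    proof (intro ballI impI)
      fix K K' assume "K \<in> ?comps" "K' \<in> ?comps" "K \<noteq> K'"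
      then have "incident_edges E ep K \<inter> incident_edges E ep K' = {}"
        by (rule incident_edges_components_disjoint)
      then show "A \<inter> delta E ep K \<inter> (A \<inter> delta E ep K') = {}"
        using delta_subset_incident_edges[of E ep K] delta_subset_incident_edges[of E ep K'] by blast
    qed
  qed
  finally show ?thesis .
qed

lemma delta_component_nonempty:
  assumes conn: "connected_graph V E ep" and "b \<in> X" "X \<subseteq> V"
    and K: "K \<in> components_minus V E ep X"
  shows "delta E ep K \<noteq> {}"
proof -
  obtain v where v: "v \<in> K" using component_nonempty[OF K] by blast
  have "v \<in> V" "b \<notin> K" using v component_subset[OF K] \<open>b \<in> X\<close> by auto
  then have "(v, b) \<in> (adj_in V E ep)\<^sup>*"
    using conn \<open>b \<in> X\<close> \<open>X \<subseteq> V\<close> unfolding connected_graph_def by blast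
  then obtain p q where pq: "(p, q) \<in> adj_in V E ep" "p \<in> K" "q \<notin> K"
    using rtrancl_exits_set[OF _ v \<open>b \<notin> K\<close>] by blast
  then obtain e d where "e \<in> E" "p = ep e d" "q = ep e (\<not> d)"
    unfolding adj_in_def by blast
  then have "e \<in> delta E ep K" using pq(2,3) by (intro deltaI) simp_all
  then show ?thesis by blast
qed

lemma two_le_card_delta_component:
  assumes eu: "eulerian V E ep" and "b \<in> X" "X \<subseteq> V"
    and K: "K \<in> components_minus V E ep X"
  shows "2 \<le> card (delta E ep K)"
proof -
  have "finite E" "finite V" "connected_graph V E ep" and deg: "\<forall>v\<in>V. even (degree E ep v)"
    using eu unfolding eulerian_def graph_def by simp_all
  have KV: "K \<subseteq> V" using component_subset[OF K] by blast
  have "even (card (delta E ep K))"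
    using \<open>finite E\<close> finite_subset[OF KV \<open>finite V\<close>] deg KV by (intro even_card_delta) auto
  moreover have "card (delta E ep K) \<noteq> 0"
    using delta_component_nonempty[OF \<open>connected_graph V E ep\<close> assms(2-4)]
      finite_subset[OF delta_subset[of E ep K] \<open>finite E\<close>] by simp
  ultimately show ?thesis by (rule two_le_even_nat)
qed

lemma card_odd_components_le:
  assumes eu: "eulerian V E ep" and "b \<in> X" "X \<subseteq> V"
  shows "2 * odd_components V E ep \<gamma> X \<le> card (delta E ep X)"
proof -
  let ?comps = "components_minus V E ep X"
  have g: "graph V E ep" using eu unfolding eulerian_def by simp
  then have fin: "finite ?comps" unfolding graph_def by (simp add: finite_components_minus)
  have "2 * odd_components V E ep \<gamma> X \<le> 2 * card ?comps"
    unfolding odd_components_def using fin by (simp add: card_mono)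
  also have "\<dots> = (\<Sum>K\<in>?comps. 2)" by simp
  also have "\<dots> \<le> (\<Sum>K\<in>?comps. card (E \<inter> delta E ep K))"
    using two_le_card_delta_component[OF assms] delta_subset[of E ep]
    by (intro sum_mono) (simp add: Int_absorb1)
  also have "\<dots> = card (E \<inter> delta E ep X)"
    by (rule card_delta_split[OF g, symmetric])
  finally show ?thesis using delta_subset[of E ep X] by (simp add: Int_absorb1)
qed

section \<open>Charges\<close>

definition charge :: "('e \<Rightarrow> bit) \<Rightarrow> 'e set \<Rightarrow> ('e \<Rightarrow> bool \<Rightarrow> 'v) \<Rightarrow> 'e set \<Rightarrow> 'v set \<Rightarrow> nat" where
  "charge \<gamma> E ep F K = wcount \<gamma> (F \<inter> incident_edges E ep K) + card (F \<inter> delta E ep K) div 2"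

lemma odd_set_iff_odd_charge: "odd_set E ep \<gamma> K \<longleftrightarrow> odd (charge \<gamma> E ep E K)"
proof -
  have "E \<inter> incident_edges E ep K = E_in E ep K \<union> delta E ep K"
    unfolding incident_edges_eq using E_in_subset[of E ep K] delta_subset[of E ep K] by blast
  moreover have "E \<inter> delta E ep K = delta E ep K" using delta_subset[of E ep K] by blast
  ultimately show ?thesis unfolding odd_set_def charge_def by simp
qed

lemma charge_eq_0:
  assumes "F \<inter> incident_edges E ep K = {}"
  shows "charge \<gamma> E ep F K = 0"
proof -
  have "F \<inter> delta E ep K = {}" using assms delta_subset_incident_edges[of E ep K] by blast
  then show ?thesis using assms unfolding charge_def wcount_def by simp
qed

lemma charge_UN:
  assumes "finite I" "\<And>i. i \<in> I \<Longrightarrow> finite (F i)"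
    and "\<And>i j. i \<in> I \<Longrightarrow> j \<in> I \<Longrightarrow> i \<noteq> j \<Longrightarrow> F i \<inter> F j = {}"
    and "\<And>i. i \<in> I \<Longrightarrow> even (card (F i \<inter> delta E ep K))"
  shows "charge \<gamma> E ep (\<Union>i\<in>I. F i) K = (\<Sum>i\<in>I. charge \<gamma> E ep (F i) K)"
  using assms(4)
  by (simp add: charge_def sum.distrib wcount_UN_Int[OF assms(1-3)] card_UN_Int[OF assms(1-3)]
      sum_div_dvd_nat)

lemma charge_untouched_component:
  assumes "b \<in> X" and C: "circuit E ep C" and "hits ep C b"
    and K: "K \<in> components_minus V E ep X" and "trail_edges C \<inter> delta E ep K = {}"
  shows "charge \<gamma> E ep (trail_edges C) K = 0"
proof (rule charge_eq_0)
  have "b \<notin> K" using component_subset[OF K] \<open>b \<in> X\<close> by blast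
  then show "trail_edges C \<inter> incident_edges E ep K = {}"
    using circuit_edges_disjoint_incident_edges[OF C \<open>hits ep C b\<close>] assms(5) by blast
qed

lemma card_touched_components_le:
  assumes g: "graph V E ep" and C: "circuit E ep C"
  shows "2 * card {K \<in> components_minus V E ep X. trail_edges C \<inter> delta E ep K \<noteq> {}}
         \<le> card (trail_edges C \<inter> delta E ep X)"
proof -
  let ?F = "trail_edges C"
  let ?comps = "components_minus V E ep X"
  let ?T = "{K \<in> ?comps. ?F \<inter> delta E ep K \<noteq> {}}"
  have fin: "finite ?comps" using g unfolding graph_def by (simp add: finite_components_minus)
  have "2 * card ?T = (\<Sum>K\<in>?T. 2)" by simp
  also have "\<dots> \<le> (\<Sum>K\<in>?T. card (?F \<inter> delta E ep K))"
  proof (rule sum_mono)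
    fix K assume "K \<in> ?T"
    moreover have "finite (?F \<inter> delta E ep K)" by (intro finite_Int disjI1 finite_imageI finite_set)
    ultimately have "card (?F \<inter> delta E ep K) \<noteq> 0" by simp
    then show "2 \<le> card (?F \<inter> delta E ep K)"
      using even_card_circuit_delta[OF C, of K] two_le_even_nat by blast
  qed
  also have "\<dots> \<le> (\<Sum>K\<in>?comps. card (?F \<inter> delta E ep K))"
    by (rule sum_mono2[OF fin]) auto
  also have "\<dots> = card (?F \<inter> delta E ep X)" by (rule card_delta_split[OF g, symmetric])
  finally show ?thesis .
qed

lemma circuit_charge_sum:
  assumes g: "graph V E ep" and C: "circuit E ep C"
  shows "(\<Sum>K\<in>components_minus V E ep X. charge \<gamma> E ep (trail_edges C) K)
           + wcount \<gamma> (trail_edges C \<inter> E_in E ep X)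
         = wcount \<gamma> (trail_edges C) + card (trail_edges C \<inter> delta E ep X) div 2"
proof -
  let ?F = "trail_edges C"
  let ?comps = "components_minus V E ep X"
  have "wcount \<gamma> ?F
      = wcount \<gamma> (?F \<inter> E_in E ep X) + (\<Sum>K\<in>?comps. wcount \<gamma> (?F \<inter> incident_edges E ep K))"
    unfolding wcount_Int wcount_def[of \<gamma> ?F]
    using trail_edges_subset[OF circuit_trail[OF C]] by (intro card_edges_split[OF g]) blast
  moreover have "card (?F \<inter> delta E ep X) div 2 = (\<Sum>K\<in>?comps. card (?F \<inter> delta E ep K) div 2)"
    unfolding card_delta_split[OF g, of _ X]
    using even_card_circuit_delta[OF C] by (intro sum_div_dvd_nat)
  ultimately show ?thesis unfolding charge_def sum.distrib by linarith
qed

lemma circuit_charge_bound: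
  assumes g: "graph V E ep" and "b \<in> X" and C: "circuit E ep C" and "hits ep C b"
    and odd_C: "odd (wcount \<gamma> (trail_edges C))"
    and S: "S \<subseteq> components_minus V E ep X"
    and odd_S: "\<And>K. K \<in> S \<Longrightarrow> odd (charge \<gamma> E ep (trail_edges C) K)"
  shows "2 + 2 * card S
         \<le> 2 * wcount \<gamma> (trail_edges C \<inter> E_in E ep X) + card (trail_edges C \<inter> delta E ep X)"
proof (rule ccontr)
  let ?F = "trail_edges C"
  let ?comps = "components_minus V E ep X"
  let ?T = "{K \<in> ?comps. ?F \<inter> delta E ep K \<noteq> {}}"
  define a where "a = wcount \<gamma> (?F \<inter> E_in E ep X)"
  define c where "c = card (?F \<inter> delta E ep X)"
  assume "\<not> 2 + 2 * card S \<le> 2 * a + c"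
  have fin: "finite ?comps" using g unfolding graph_def by (simp add: finite_components_minus)
  then have finT: "finite ?T" by (rule finite_subset[rotated]) blast
  have untouched: "charge \<gamma> E ep ?F K = 0" if "K \<in> ?comps - ?T" for K
    using that by (intro charge_untouched_component[where V = V, OF \<open>b \<in> X\<close> C \<open>hits ep C b\<close>]) simp_all
  have ST: "S \<subseteq> ?T"
  proof
    fix K assume "K \<in> S"
    then have "K \<in> ?comps" and charged: "charge \<gamma> E ep ?F K \<noteq> 0"
      using S odd_S[of K] by (blast, intro notI, simp)
    show "K \<in> ?T"
    proof (rule ccontr)
      assume "K \<notin> ?T"
      with \<open>K \<in> ?comps\<close> have "K \<in> ?comps - ?T" by (rule DiffI)
      then show False using untouched charged by simp
    qed
  qed
  obtain m where m: "c = 2 * m" using even_card_circuit_delta[OF C, of X] unfolding c_def by blast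
  have "card S \<le> card ?T" using ST finT by (rule card_mono[rotated])
  moreover have "a + m \<le> card S" using m \<open>\<not> 2 + 2 * card S \<le> 2 * a + c\<close> by linarith
  moreover have "2 * card ?T \<le> c" unfolding c_def by (rule card_touched_components_le[OF g C])
  ultimately have "a = 0" "card S = card ?T" "c = 2 * card S" using m by linarith+
  then have "S = ?T" using ST finT by (intro card_subset_eq) simp_all
  then have "(\<Sum>K\<in>?comps. charge \<gamma> E ep ?F K) = (\<Sum>K\<in>S. charge \<gamma> E ep ?F K)"
    by (simp only:) (rule sum.mono_neutral_right[OF fin], blast, intro ballI untouched)
  then have "(\<Sum>K\<in>S. charge \<gamma> E ep ?F K) = wcount \<gamma> ?F + card S"
    using circuit_charge_sum[OF g C, where X = X and \<gamma> = \<gamma>] \<open>a = 0\<close> \<open>c = 2 * card S\<close>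
    unfolding a_def c_def by simp
  moreover have "{K \<in> S. odd (charge \<gamma> E ep ?F K)} = S" using odd_S by auto
  moreover have "finite S" using S fin by (rule finite_subset)
  ultimately show False using even_sum_iff[of S "charge \<gamma> E ep ?F"] odd_C by simp
qed

section \<open>Floodings\<close>

lemma circuit_decomposition_circuit:
  "circuit_decomposition E ep Cs \<Longrightarrow> i < length Cs \<Longrightarrow> circuit E ep (Cs ! i)"
  unfolding circuit_decomposition_def by simp

lemma circuit_decomposition_UN:
  assumes dec: "circuit_decomposition E ep Cs"
  shows "(\<Union>i<length Cs. trail_edges (Cs ! i)) = E"
proof (rule antisym)
  show "(\<Union>i<length Cs. trail_edges (Cs ! i)) \<subseteq> E"
  proof (rule UN_least)
    fix i assume "i \<in> {..<length Cs}"
    then show "trail_edges (Cs ! i) \<subseteq> E"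
      using circuit_decomposition_circuit[OF dec] by (intro trail_edges_subset circuit_trail) simp
  qed
  show "E \<subseteq> (\<Union>i<length Cs. trail_edges (Cs ! i))"
  proof
    fix e assume "e \<in> E"
    then have "\<exists>!i. i < length Cs \<and> e \<in> trail_edges (Cs ! i)"
      using dec unfolding circuit_decomposition_def by simp
    then obtain i where "i < length Cs" "e \<in> trail_edges (Cs ! i)" by (elim ex1E) blast
    then show "e \<in> (\<Union>i<length Cs. trail_edges (Cs ! i))" by blast
  qed
qed

lemma circuit_decomposition_disjoint:
  assumes dec: "circuit_decomposition E ep Cs" and "i < length Cs" "j < length Cs" "i \<noteq> j"
  shows "trail_edges (Cs ! i) \<inter> trail_edges (Cs ! j) = {}"
proof (rule ccontr)
  assume "trail_edges (Cs ! i) \<inter> trail_edges (Cs ! j) \<noteq> {}"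
  then obtain e where e: "e \<in> trail_edges (Cs ! i)" "e \<in> trail_edges (Cs ! j)" by blast
  have "trail_edges (Cs ! i) \<subseteq> E"
    using circuit_decomposition_circuit[OF dec \<open>i < length Cs\<close>] by (intro trail_edges_subset circuit_trail)
  then have "e \<in> E" using e(1) by blast
  then have "\<exists>!k. k < length Cs \<and> e \<in> trail_edges (Cs ! k)"
    using dec unfolding circuit_decomposition_def by simp
  then have "i = j"
  proof (rule ex1E)
    fix k assume "\<forall>l. l < length Cs \<and> e \<in> trail_edges (Cs ! l) \<longrightarrow> l = k"
    then have "i = k" "j = k" using e assms(2,3) by blast+
    then show "i = j" by simp
  qed
  then show False using \<open>i \<noteq> j\<close> by simp
qed

definition flooding_decomposition ::
  "'e set \<Rightarrow> ('e \<Rightarrow> bool \<Rightarrow> 'v) \<Rightarrow> ('e \<Rightarrow> bit) \<Rightarrow> 'v \<Rightarrow> ('e \<times> bool) list list \<Rightarrow> bool" where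
  "flooding_decomposition E ep \<gamma> b Cs \<longleftrightarrow>
     circuit_decomposition E ep Cs \<and> (\<forall>C\<in>set Cs. weight \<gamma> C \<noteq> 0 \<and> hits ep C b)"

lemma flooding_number_property:
  assumes "P 0" "\<And>Cs. flooding_decomposition E ep \<gamma> b Cs \<Longrightarrow> P (length Cs)"
    and "\<And>k. P k \<Longrightarrow> k \<le> N"
  shows "P (flooding_number V E ep \<gamma> b)"
proof -
  let ?M = "{0} \<union> {length Cs |Cs. flooding_decomposition E ep \<gamma> b Cs}"
  have M: "P k" if "k \<in> ?M" for k using that assms(1,2) by blast
  have "?M \<subseteq> {..N}"
  proof
    fix k assume "k \<in> ?M"
    then show "k \<in> {..N}" using assms(3)[OF M] by simp
  qed
  then have "finite ?M" by (rule finite_subset) simp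
  then have "P (Max ?M)" by (intro M Max_in) simp_all
  moreover have "flooding_number V E ep \<gamma> b = Max ?M"
    unfolding flooding_number_def flooding_decomposition_def by (rule HOL.refl)
  ultimately show ?thesis by (simp only:)
qed

lemma circuit_decomposition_card:
  assumes dec: "circuit_decomposition E ep Cs" and "B \<subseteq> E"
  shows "card B = (\<Sum>i<length Cs. card (trail_edges (Cs ! i) \<inter> B))"
proof -
  have "card B = card ((\<Union>i<length Cs. trail_edges (Cs ! i)) \<inter> B)"
    unfolding circuit_decomposition_UN[OF dec] using \<open>B \<subseteq> E\<close> by (simp add: Int_absorb1)
  also have "\<dots> = (\<Sum>i<length Cs. card (trail_edges (Cs ! i) \<inter> B))"
    by (rule card_UN_Int) (simp_all add: circuit_decomposition_disjoint[OF dec])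
  finally show ?thesis .
qed

lemma circuit_decomposition_wcount:
  assumes dec: "circuit_decomposition E ep Cs" and "B \<subseteq> E"
  shows "wcount \<gamma> B = (\<Sum>i<length Cs. wcount \<gamma> (trail_edges (Cs ! i) \<inter> B))"
proof -
  have "wcount \<gamma> B = wcount \<gamma> ((\<Union>i<length Cs. trail_edges (Cs ! i)) \<inter> B)"
    unfolding circuit_decomposition_UN[OF dec] using \<open>B \<subseteq> E\<close> by (simp add: Int_absorb1)
  also have "\<dots> = (\<Sum>i<length Cs. wcount \<gamma> (trail_edges (Cs ! i) \<inter> B))"
    by (rule wcount_UN_Int) (simp_all add: circuit_decomposition_disjoint[OF dec])
  finally show ?thesis .
qed

lemma circuit_decomposition_charge:
  assumes dec: "circuit_decomposition E ep Cs"
  shows "charge \<gamma> E ep E K = (\<Sum>i<length Cs. charge \<gamma> E ep (trail_edges (Cs ! i)) K)"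
proof -
  have "charge \<gamma> E ep E K = charge \<gamma> E ep (\<Union>i<length Cs. trail_edges (Cs ! i)) K"
    by (simp only: circuit_decomposition_UN[OF dec])
  also have "\<dots> = (\<Sum>i<length Cs. charge \<gamma> E ep (trail_edges (Cs ! i)) K)"
    using even_card_circuit_delta[OF circuit_decomposition_circuit[OF dec]]
    by (intro charge_UN) (simp_all add: circuit_decomposition_disjoint[OF dec])
  finally show ?thesis .
qed

lemma odd_set_charges_circuit:
  assumes "circuit_decomposition E ep Cs" and "odd_set E ep \<gamma> K"
  shows "\<exists>i<length Cs. odd (charge \<gamma> E ep (trail_edges (Cs ! i)) K)"
proof (rule ccontr)
  assume "\<not> ?thesis"
  then have "even (\<Sum>i<length Cs. charge \<gamma> E ep (trail_edges (Cs ! i)) K)" by (intro dvd_sum) simp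
  then show False
    using assms circuit_decomposition_charge odd_set_iff_odd_charge by metis
qed

lemma flooding_decomposition_circuit:
  assumes fl: "flooding_decomposition E ep \<gamma> b Cs" and sh: "is_shifting V E ep \<gamma> \<gamma>'"
    and i: "i < length Cs"
  shows "circuit E ep (Cs ! i)" "hits ep (Cs ! i) b" "odd (wcount \<gamma>' (trail_edges (Cs ! i)))"
proof -
  have dec: "circuit_decomposition E ep Cs" using fl unfolding flooding_decomposition_def by simp
  show C: "circuit E ep (Cs ! i)" by (rule circuit_decomposition_circuit[OF dec i])
  have "Cs ! i \<in> set Cs" using i by simp
  then have "weight \<gamma> (Cs ! i) \<noteq> 0" and "hits ep (Cs ! i) b"
    using fl unfolding flooding_decomposition_def by simp_all
  then have "weight \<gamma>' (Cs ! i) \<noteq> 0" using weight_shifting[OF sh C] by simp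
  then show "odd (wcount \<gamma>' (trail_edges (Cs ! i)))"
    using weight_eq_0_iff[OF circuit_trail[OF C]] by simp
  show "hits ep (Cs ! i) b" by fact
qed

lemma flooding_decomposition_bound:
  assumes eu: "eulerian V E ep" and "b \<in> X"
    and sh: "is_shifting V E ep \<gamma> \<gamma>'" and fl: "flooding_decomposition E ep \<gamma> b Cs"
  shows "2 * length Cs + 2 * odd_components V E ep \<gamma>' X
         \<le> 2 * wcount \<gamma>' (E_in E ep X) + card (delta E ep X)"
proof -
  define n where "n = length Cs"
  define F where "F i = trail_edges (Cs ! i)" for i
  define Odd where "Odd = {K \<in> components_minus V E ep X. odd_set E ep \<gamma>' K}"
  have g: "graph V E ep" using eu unfolding eulerian_def by simp
  have dec: "circuit_decomposition E ep Cs" using fl unfolding flooding_decomposition_def by simp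
  have "\<exists>i<n. odd (charge \<gamma>' E ep (F i) K)" if "K \<in> Odd" for K
    using odd_set_charges_circuit[OF dec] that unfolding Odd_def n_def F_def by blast
  then obtain ch where ch: "\<And>K. K \<in> Odd \<Longrightarrow> ch K < n \<and> odd (charge \<gamma>' E ep (F (ch K)) K)"
    by metis
  define S where "S i = {K \<in> Odd. ch K = i}" for i
  have "2 + 2 * card (S i) \<le> 2 * wcount \<gamma>' (F i \<inter> E_in E ep X) + card (F i \<inter> delta E ep X)"
    if "i < n" for i
    using flooding_decomposition_circuit[OF fl sh that[unfolded n_def]] ch
    unfolding F_def S_def Odd_def by (intro circuit_charge_bound[OF g \<open>b \<in> X\<close>]) auto
  then have "(\<Sum>i<n. 2 + 2 * card (S i))
      \<le> (\<Sum>i<n. 2 * wcount \<gamma>' (F i \<inter> E_in E ep X) + card (F i \<inter> delta E ep X))"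
    by (intro sum_mono) simp
  also have "\<dots> = 2 * wcount \<gamma>' (E_in E ep X) + card (delta E ep X)"
    using circuit_decomposition_wcount[OF dec E_in_subset, of \<gamma>' ep X]
      circuit_decomposition_card[OF dec delta_subset, of ep X]
    unfolding n_def F_def by (simp add: sum.distrib sum_distrib_left)
  also have "card Odd = (\<Sum>i<n. card (S i))"
  proof -
    have "finite (components_minus V E ep X)"
      using g unfolding graph_def by (simp add: finite_components_minus)
    then have "finite Odd" unfolding Odd_def by (rule finite_subset[rotated]) blast
    have "Odd = (\<Union>i<n. S i)" using ch unfolding S_def by blast
    then have "card Odd = card (\<Union>i<n. S i)" by (rule arg_cong)
    also have "\<dots> = (\<Sum>i<n. card (S i))"
      using \<open>finite Odd\<close> unfolding S_def by (intro card_UN_disjoint) auto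
    finally show ?thesis .
  qed
  then have "(\<Sum>i<n. 2 + 2 * card (S i)) = 2 * n + 2 * card Odd"
    unfolding sum.distrib sum_distrib_left[symmetric] by simp
  moreover have "odd_components V E ep \<gamma>' X = card Odd" unfolding odd_components_def Odd_def ..
  ultimately show ?thesis unfolding n_def by simp
qed

theorem mainTheorem2:
  fixes V :: "'v set" and E :: "'e set" and ep :: "'e \<Rightarrow> bool \<Rightarrow> 'v"
    and \<gamma> \<gamma>' :: "'e \<Rightarrow> bit" and b :: 'v and X :: "'v set"
  assumes "eulerian V E ep"
    and "b \<in> V"
    and "is_shifting V E ep \<gamma> \<gamma>'"
    and "X \<subseteq> V"
    and "b \<in> X"
  shows "real (flooding_number V E ep \<gamma> b)
         \<le> real (wcount \<gamma>' (E_in E ep X)) + real (card (delta E ep X)) / 2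
           - real (odd_components V E ep \<gamma>' X)"
proof -
  let ?W = "wcount \<gamma>' (E_in E ep X)"
  let ?D = "card (delta E ep X)"
  let ?O = "odd_components V E ep \<gamma>' X"
  have "2 * flooding_number V E ep \<gamma> b + 2 * ?O \<le> 2 * ?W + ?D"
  proof (rule flooding_number_property[where P = "\<lambda>k. 2 * k + 2 * ?O \<le> 2 * ?W + ?D"])
    show "2 * 0 + 2 * ?O \<le> 2 * ?W + ?D"
      using card_odd_components_le[OF assms(1,5,4), of \<gamma>'] by linarith
    show "2 * length Cs + 2 * ?O \<le> 2 * ?W + ?D" if "flooding_decomposition E ep \<gamma> b Cs" for Cs
      using flooding_decomposition_bound[OF assms(1,5,3) that] .
    show "k \<le> ?W + ?D" if "2 * k + 2 * ?O \<le> 2 * ?W + ?D" for k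
      using that by linarith
  qed
  then have "real (2 * flooding_number V E ep \<gamma> b + 2 * ?O) \<le> real (2 * ?W + ?D)"
    by (simp only: of_nat_le_iff)
  then have "2 * real (flooding_number V E ep \<gamma> b) + 2 * real ?O \<le> 2 * real ?W + real ?D"
    by simp
  then show ?thesis by linarith
qed

end
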